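(* Let $\Delta$ be a finite, flag, simply connected simplicial complex, with $\mathcal{P}_H$, $q$, $T$, $p_n$, $L$ and $\Phi_n$ as in the context, and let $K$ be a constant such that $\mathrm{Area}_{\mathcal{P}_H}\big(p_n(q,\iota e)\,e^n\,p_n(\tau e,q)\big)\le K|n|^2$ for all $e\in\mathrm{Edge}(\Delta)$ and $n\in\mathbb{Z}$. Let $e\cdot f\cdot g$ be a combinatorial 1-cycle in $\Delta$. Then for every $n\in\mathbb{Z}$, $\mathrm{Area}_{\mathcal{P}_H}\big(\Phi_n(e^{-1}f^{-1}g^{-1})\big)\le(3K+4)|n|^2+(6L+6)|n|+5$.
   Context: $\mathrm{Edge}(\Delta)$ is the set of directed edges of $\Delta$; for $e$ in it, $\iota e$, $\tau e$ are its initial and terminal vertices and $\overline{e}$ is the reversed edge. $e_1\cdot\ldots\cdot e_l$ is a combinatorial path if $\tau e_i=\iota e_{i+1}$, and a combinatorial 1-cycle if also $\tau e_l=\iota e_1$. $\mathcal{P}_H=\langle\mathrm{Edge}(\Delta)\mid\mathcal{R}_H\rangle$ where $\mathcal{R}_H$ consists of the words $e\overline{e}$ ($e\in\mathrm{Edge}(\Delta)$) and $efg$, $e^{-1}f^{-1}g^{-1}$ for every combinatorial 1-cycle $e\cdot f\cdot g$. $\mathrm{Area}_{\mathcal{P}_H}(w)$ is the least $m$ such that $w$ is freely equal to $\prod_{i=1}^m x_ir_ix_i^{-1}$ with $r_i\in\mathcal{R}_H^{\pm1}$. For a letter $e$ and $k\in\mathbb{Z}$, $e^k$ is the word of $k$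 copies of $e$ if $k\ge0$ and $|k|$ copies of $e^{-1}$ if $k<0$. Fix a vertex $q$ and a spanning tree $T$ of the 1-skeleton of $\Delta$; $p_n(u,v)=e_1^n\cdots e_l^n$ where $e_1\cdot\ldots\cdot e_l$ is the unique geodesic combinatorial path in $T$ from $u$ to $v$. $L$ is the maximum over vertices $u,v$ of their edge-path distance in $T$. $\Phi_n$ ($n\in\mathbb{Z}$) is the endomorphism of the free monoid on $\mathrm{Edge}(\Delta)^{\pm1}$ with $\Phi_n(e)=p_n(q,\iota e)\,e^{n+1}\,p_n(\tau e,q)$ and $\Phi_n(e^{-1})=\Phi_n(e)^{-1}$ (formal inverse word). *)

theory Defs
  imports "HOL-Analysis.Analysis" "HOL-Library.Extended_Real"
begin

definition simplicial_complex :: "'v set set \<Rightarrow> bool" where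
  "simplicial_complex D \<longleftrightarrow>
     (\<forall>s\<in>D. finite s \<and> s \<noteq> {}) \<and> (\<forall>s\<in>D. \<forall>t. t \<subseteq> s \<and> t \<noteq> {} \<longrightarrow> t \<in> D)"

definition vertices :: "'v set set \<Rightarrow> 'v set" where
  "vertices D = {v. {v} \<in> D}"

definition flag_complex :: "'v set set \<Rightarrow> bool" where
  "flag_complex D \<longleftrightarrow>
     (\<forall>s. finite s \<and> s \<noteq> {} \<and> s \<subseteq> vertices D \<and> (\<forall>u\<in>s. \<forall>v\<in>s. u \<noteq> v \<longrightarrow> {u, v} \<in> D)
          \<longrightarrow> s \<in> D)"

definition realization :: "('v::finite) set set \<Rightarrow> (real ^ 'v) set" where
  "realization D = (\<Union>s\<in>D. convex hull ((\<lambda>v. axis v (1::real)) ` s))"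

type_synonym 'v edge = "'v \<times> 'v"

definition Edge :: "'v set set \<Rightarrow> 'v edge set" where
  "Edge D = {(u, v). u \<noteq> v \<and> {u, v} \<in> D}"

abbreviation iota :: "'v edge \<Rightarrow> 'v" where "iota e \<equiv> fst e"
abbreviation tau :: "'v edge \<Rightarrow> 'v" where "tau e \<equiv> snd e"

definition rev_edge :: "'v edge \<Rightarrow> 'v edge" where
  "rev_edge e = (snd e, fst e)"

fun cpath :: "'v edge set \<Rightarrow> 'v \<Rightarrow> 'v edge list \<Rightarrow> 'v \<Rightarrow> bool" where
  "cpath E u [] v \<longleftrightarrow> u = v"
| "cpath E u (e # es) v \<longleftrightarrow> e \<in> E \<and> fst e = u \<and> cpath E (snd e) es v"

definition comb_1cycle3 :: "'v set set \<Rightarrow> 'v edge \<Rightarrow> 'v edge \<Rightarrow> 'v edge \<Rightarrow> bool" where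
  "comb_1cycle3 D e f g \<longleftrightarrow> e \<in> Edge D \<and> f \<in> Edge D \<and> g \<in> Edge D \<and>
      tau e = iota f \<and> tau f = iota g \<and> tau g = iota e"

text \<open>T is a set of directed edges closed under reversal (each undirected tree
edge appears with both orientations).  A spanning tree is connected on all
vertices and has no simple cycle.\<close>
definition spanning_tree :: "'v set set \<Rightarrow> 'v edge set \<Rightarrow> bool" where
  "spanning_tree D T \<longleftrightarrow>
     T \<subseteq> Edge D \<and> (\<forall>e\<in>T. rev_edge e \<in> T) \<and>
     (\<forall>u\<in>vertices D. \<forall>v\<in>vertices D. \<exists>es. cpath T u es v) \<and>
     \<not> (\<exists>vs. length vs \<ge> 3 \<and> distinct vs \<and>
            (\<forall>i < length vs. (vs ! i, vs ! ((i + 1) mod length vs)) \<in> T))"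

definition geodesic_tree_path :: "'v edge set \<Rightarrow> 'v \<Rightarrow> 'v \<Rightarrow> 'v edge list \<Rightarrow> bool" where
  "geodesic_tree_path T u v es \<longleftrightarrow>
     cpath T u es v \<and> (\<forall>es'. cpath T u es' v \<longrightarrow> length es \<le> length es')"

definition tree_path :: "'v edge set \<Rightarrow> 'v \<Rightarrow> 'v \<Rightarrow> 'v edge list" where
  "tree_path T u v = (THE es. geodesic_tree_path T u v es)"

definition tree_diam :: "'v set set \<Rightarrow> 'v edge set \<Rightarrow> nat" where
  "tree_diam D T = Max {length (tree_path T u v) | u v. u \<in> vertices D \<and> v \<in> vertices D}"

text \<open>A letter is (e, False) for e and (e, True) for e^{-1}.\<close>
type_synonym 'v letter = "'v edge \<times> bool"
type_synonym 'v word = "'v letter list"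

definition inv_letter :: "'v letter \<Rightarrow> 'v letter" where
  "inv_letter a = (fst a, \<not> snd a)"

definition inv_word :: "'v word \<Rightarrow> 'v word" where
  "inv_word w = rev (map inv_letter w)"

definition epow :: "'v edge \<Rightarrow> int \<Rightarrow> 'v word" where
  "epow e k = (if 0 \<le> k then replicate (nat k) (e, False) else replicate (nat (- k)) (e, True))"

inductive free_red1 :: "'v word \<Rightarrow> 'v word \<Rightarrow> bool" where
  "free_red1 (u @ [a, inv_letter a] @ v) (u @ v)"

definition free_eq :: "'v word \<Rightarrow> 'v word \<Rightarrow> bool" where
  "free_eq = equivclp free_red1"

definition relators_H :: "'v set set \<Rightarrow> 'v word set" where
  "relators_H D =
     {[(e, False), (rev_edge e, False)] | e. e \<in> Edge D} \<union>
     {[(e, False), (f, False), (g, False)] | e f g. comb_1cycle3 D e f g} \<union>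
     {[(e, True), (f, True), (g, True)] | e f g. comb_1cycle3 D e f g}"

definition relators_pm :: "'v set set \<Rightarrow> 'v word set" where
  "relators_pm D = relators_H D \<union> inv_word ` relators_H D"

definition prod_conj :: "('v word \<times> 'v word) list \<Rightarrow> 'v word" where
  "prod_conj ps = concat (map (\<lambda>(x, r). x @ r @ inv_word x) ps)"

text \<open>Area (infinite if w is not null-homotopic, i.e. the infimum of the empty set).\<close>
definition Area :: "'v set set \<Rightarrow> 'v word \<Rightarrow> enat" where
  "Area D w = Inf {enat (length ps) | ps.
      (\<forall>(x, r) \<in> set ps. set x \<subseteq> Edge D \<times> UNIV \<and> r \<in> relators_pm D) \<and> free_eq w (prod_conj ps)}"

definition p_n :: "'v edge set \<Rightarrow> int \<Rightarrow> 'v \<Rightarrow> 'v \<Rightarrow> 'v word" where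
  "p_n T n u v = concat (map (\<lambda>e. epow e n) (tree_path T u v))"

definition Phi_edge :: "'v edge set \<Rightarrow> 'v \<Rightarrow> int \<Rightarrow> 'v edge \<Rightarrow> 'v word" where
  "Phi_edge T q n e = p_n T n q (iota e) @ epow e (n + 1) @ p_n T n (tau e) q"

definition Phi :: "'v edge set \<Rightarrow> 'v \<Rightarrow> int \<Rightarrow> 'v word \<Rightarrow> 'v word" where
  "Phi T q n w = concat (map (\<lambda>a. if snd a then inv_word (Phi_edge T q n (fst a))
                                  else Phi_edge T q n (fst a)) w)"

end

theory Submission
  imports Defs
begin

text \<open>Write \<open>P(u,v)\<close> for \<open>p_n(u,v)\<close>, \<open>M = -(n+1)\<close>, and \<open>e = (a,b)\<close>, \<open>f = (b,c)\<close>, \<open>g = (c,a)\<close>.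
  Up to a cyclic permutation, \<open>\<Phi>\<^sub>n(e\<^sup>-\<^sup>1 f\<^sup>-\<^sup>1 g\<^sup>-\<^sup>1)\<close> is
  \<open>e\<^sup>M P(q,a)\<^sup>-\<^sup>1 P(c,q)\<^sup>-\<^sup>1 f\<^sup>M P(q,b)\<^sup>-\<^sup>1 P(a,q)\<^sup>-\<^sup>1 g\<^sup>M P(q,c)\<^sup>-\<^sup>1 P(b,q)\<^sup>-\<^sup>1\<close>.
  Each factor \<open>P(q,a)\<^sup>-\<^sup>1 P(c,q)\<^sup>-\<^sup>1\<close> equals \<open>g\<^sup>-\<^sup>n\<close> at the cost of the \<open>K n\<^sup>2\<close> relators
  filling the loop \<open>P(q,c) g\<^sup>n P(a,q)\<close>, plus \<open>L|n|\<close> relators \<open>[e, rev_edge e]\<close> for cancelling each of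
  \<open>P(a,q) P(q,a)\<close> and \<open>P(q,c) P(c,q)\<close>; this uses that the tree path from \<open>v\<close> to \<open>u\<close> is the
  reversal of the one from \<open>u\<close> to \<open>v\<close>, i.e. uniqueness of geodesics in a tree.
  What remains, \<open>e\<^sup>M g\<^sup>-\<^sup>n f\<^sup>M e\<^sup>-\<^sup>n g\<^sup>M f\<^sup>-\<^sup>n\<close>, is killed by about \<open>2n\<^sup>2 + 6|n|\<close> triangle
  relators: two edges of a triangle commute modulo two relators, and \<open>x\<^sup>k y\<^sup>k z\<^sup>k\<close> needs \<open>k\<^sup>2\<close>.\<close>

lemma free_eq_refl [simp]: "free_eq w w"
  by (simp add: free_eq_def)

lemma free_eq_sym: "free_eq u v \<Longrightarrow> free_eq v u"
  unfolding free_eq_def by (rule equivclp_sym)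

lemma free_eq_trans: "free_eq u v \<Longrightarrow> free_eq v w \<Longrightarrow> free_eq u w"
  unfolding free_eq_def by (rule equivclp_trans)

lemma free_eq_cancel: "free_eq (u @ [a, inv_letter a] @ v) (u @ v)"
  unfolding free_eq_def by (intro r_into_equivclp free_red1.intros)

lemma free_eq_map:
  assumes red: "\<And>u v. free_red1 u v \<Longrightarrow> free_eq (h u) (h v)" and "free_eq u v"
  shows "free_eq (h u) (h v)"
  using \<open>free_eq u v\<close> unfolding free_eq_def
proof (induction rule: equivclp_induct)
  case (step y z)
  then have "free_eq (h y) (h z)"
    using red[of y z] red[of z y] free_eq_sym by blast
  with step.IH show ?case
    unfolding free_eq_def by (rule equivclp_trans)
qed simp

lemma free_eq_context:
  assumes "free_eq u v"
  shows "free_eq (x @ u @ y) (x @ v @ y)"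
proof (rule free_eq_map[where h = "\<lambda>w. x @ w @ y", OF _ assms])
  fix u' v' :: "'a word"
  assume "free_red1 u' v'"
  then show "free_eq (x @ u' @ y) (x @ v' @ y)"
    by cases (use free_eq_cancel[of "x @ _" _ "_ @ y"] in simp)
qed

lemma free_eq_append: "free_eq u u' \<Longrightarrow> free_eq v v' \<Longrightarrow> free_eq (u @ v) (u' @ v')"
  using free_eq_context[of u u' "[]" v] free_eq_context[of v v' u' "[]"] free_eq_trans by auto

lemma inv_letter_inv [simp]: "inv_letter (inv_letter a) = a"
  by (simp add: inv_letter_def)

lemma inv_word_inv [simp]: "inv_word (inv_word w) = w"
  by (simp add: inv_word_def rev_map comp_def)

lemma inv_word_Nil [simp]: "inv_word [] = []"
  by (simp add: inv_word_def)

lemma inv_word_Cons [simp]: "inv_word (a # w) = inv_word w @ [inv_letter a]"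
  by (simp add: inv_word_def)

lemma inv_word_append [simp]: "inv_word (u @ v) = inv_word v @ inv_word u"
  by (simp add: inv_word_def)

lemma free_eq_right_inverse: "free_eq (w @ inv_word w) []"
proof (induction w)
  case (Cons a w)
  have "free_eq ([a] @ (w @ inv_word w) @ [inv_letter a]) ([a] @ [] @ [inv_letter a])"
    using Cons.IH by (rule free_eq_context)
  moreover have "free_eq [a, inv_letter a] []"
    using free_eq_cancel[of "[]" a "[]"] by simp
  ultimately show ?case
    by (auto intro: free_eq_trans)
qed simp

lemma free_eq_left_inverse: "free_eq (inv_word w @ w) []"
  using free_eq_right_inverse[of "inv_word w"] by simp

lemma free_eq_inv_word:
  assumes "free_eq u v"
  shows "free_eq (inv_word u) (inv_word v)"
proof (rule free_eq_map[where h = inv_word, OF _ assms])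
  fix u' v' :: "'a word"
  assume "free_red1 u' v'"
  then show "free_eq (inv_word u') (inv_word v')"
    by cases (use free_eq_cancel[of "inv_word _" _ "inv_word _"] in simp)
qed

section \<open>Area and equality modulo relators\<close>

definition edge_word :: "'v set set \<Rightarrow> 'v word \<Rightarrow> bool" where
  "edge_word D w \<longleftrightarrow> set w \<subseteq> Edge D \<times> UNIV"

definition area_le :: "'v set set \<Rightarrow> nat \<Rightarrow> 'v word \<Rightarrow> bool" where
  "area_le D k w \<longleftrightarrow> (\<exists>ps. (\<forall>(x, r) \<in> set ps. edge_word D x \<and> r \<in> relators_pm D) \<and>
                            length ps \<le> k \<and> free_eq w (prod_conj ps))"

lemma edge_word_Nil [simp]: "edge_word D []"
  by (simp add: edge_word_def)

lemma edge_word_Cons [simp]: "edge_word D (a # w) \<longleftrightarrow> fst a \<in> Edge D \<and> edge_word D w"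
  by (cases a) (auto simp: edge_word_def)

lemma edge_word_append [simp]: "edge_word D (u @ v) \<longleftrightarrow> edge_word D u \<and> edge_word D v"
  by (auto simp: edge_word_def)

lemma edge_word_inv_word [simp]: "edge_word D (inv_word w) \<longleftrightarrow> edge_word D w"
  by (auto simp: edge_word_def inv_word_def inv_letter_def)

lemma edge_word_replicate [simp]: "edge_word D (replicate j a) \<longleftrightarrow> j = 0 \<or> fst a \<in> Edge D"
  by (auto simp: edge_word_def)

lemma prod_conj_Nil [simp]: "prod_conj [] = []"
  by (simp add: prod_conj_def)

lemma prod_conj_Cons [simp]: "prod_conj ((x, r) # ps) = x @ r @ inv_word x @ prod_conj ps"
  by (simp add: prod_conj_def)

lemma prod_conj_append [simp]: "prod_conj (ps @ qs) = prod_conj ps @ prod_conj qs"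
  by (simp add: prod_conj_def)

lemma inv_word_prod_conj:
  "inv_word (prod_conj ps) = prod_conj (rev (map (\<lambda>(x, r). (x, inv_word r)) ps))"
  by (induction ps) auto

lemma conj_prod_conj:
  "free_eq (x @ prod_conj ps @ inv_word x) (prod_conj (map (\<lambda>(y, r). (x @ y, r)) ps))"
proof (induction ps)
  case Nil
  then show ?case using free_eq_right_inverse by simp
next
  case (Cons p ps)
  obtain y r where p: "p = (y, r)" by fastforce
  have "free_eq ((x @ y @ r @ inv_word y) @ [] @ (prod_conj ps @ inv_word x))
                ((x @ y @ r @ inv_word y) @ (inv_word x @ x) @ (prod_conj ps @ inv_word x))"
    by (intro free_eq_context free_eq_sym[OF free_eq_left_inverse])
  moreover have "free_eq ((x @ y @ r @ inv_word y @ inv_word x) @ (x @ prod_conj ps @ inv_word x))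
      ((x @ y @ r @ inv_word y @ inv_word x) @ prod_conj (map (\<lambda>(y, r). (x @ y, r)) ps))"
    using free_eq_append[OF free_eq_refl Cons.IH] .
  ultimately show ?case
    using p by (auto intro: free_eq_trans)
qed

lemma Area_le_enat_iff: "Area D w \<le> enat k \<longleftrightarrow> area_le D k w"
proof -
  let ?S = "{enat (length ps) | ps. (\<forall>(x, r) \<in> set ps. set x \<subseteq> Edge D \<times> UNIV \<and> r \<in> relators_pm D)
                                   \<and> free_eq w (prod_conj ps)}"
  have "Area D w \<le> enat k \<longleftrightarrow> Inf ?S < enat (Suc k)"
    by (cases "Inf ?S") (auto simp: Area_def)
  also have "\<dots> \<longleftrightarrow> area_le D k w"
    unfolding Inf_less_iff area_le_def edge_word_def by (fastforce simp: less_Suc_eq_le)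
  finally show ?thesis .
qed

lemma Area_le_ereal_iff:
  "ereal_of_enat (Area D w) \<le> ereal r \<longleftrightarrow> (\<exists>k. area_le D k w \<and> real k \<le> r)"
proof
  assume "ereal_of_enat (Area D w) \<le> ereal r"
  then obtain k where "Area D w = enat k" "real k \<le> r"
    by (cases "Area D w") auto
  then show "\<exists>k. area_le D k w \<and> real k \<le> r"
    using Area_le_enat_iff[of D w k] by auto
next
  assume "\<exists>k. area_le D k w \<and> real k \<le> r"
  then obtain k where "Area D w \<le> enat k" "real k \<le> r"
    using Area_le_enat_iff by blast
  then have "ereal_of_enat (Area D w) \<le> ereal (real k)"
    using ereal_of_enat_le_iff[of "Area D w" "enat k"] by simp
  with \<open>real k \<le> r\<close> show "ereal_of_enat (Area D w) \<le> ereal r"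
    by (simp add: order_trans)
qed

lemma area_le_Nil [simp]: "area_le D k []"
  unfolding area_le_def by (rule exI[of _ "[]"]) simp

lemma area_le_free_eq: "free_eq w' w \<Longrightarrow> area_le D k w \<Longrightarrow> area_le D k w'"
  unfolding area_le_def using free_eq_trans by blast

lemma area_le_mono: "area_le D k w \<Longrightarrow> k \<le> k' \<Longrightarrow> area_le D k' w"
  unfolding area_le_def by auto

lemma area_le_relator: "r \<in> relators_pm D \<Longrightarrow> area_le D 1 r"
  unfolding area_le_def by (rule exI[of _ "[([], r)]"]) simp

lemma area_le_append: "area_le D k u \<Longrightarrow> area_le D l v \<Longrightarrow> area_le D (k + l) (u @ v)"
  unfolding area_le_def
proof (elim exE conjE)
  fix ps qs
  assume "\<forall>(x, r) \<in> set ps. edge_word D x \<and> r \<in> relators_pm D" "length ps \<le> k"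
    "free_eq u (prod_conj ps)" "\<forall>(x, r) \<in> set qs. edge_word D x \<and> r \<in> relators_pm D"
    "length qs \<le> l" "free_eq v (prod_conj qs)"
  then show "\<exists>ps. (\<forall>(x, r) \<in> set ps. edge_word D x \<and> r \<in> relators_pm D) \<and>
                  length ps \<le> k + l \<and> free_eq (u @ v) (prod_conj ps)"
    by (intro exI[of _ "ps @ qs"]) (auto intro: free_eq_append)
qed

lemma inv_word_relators_pm: "r \<in> relators_pm D \<Longrightarrow> inv_word r \<in> relators_pm D"
  unfolding relators_pm_def by (auto intro: image_eqI[of _ inv_word, OF inv_word_inv[symmetric]])

lemma area_le_inv_word: "area_le D k w \<Longrightarrow> area_le D k (inv_word w)"
  unfolding area_le_def
proof (elim exE conjE)
  fix ps
  assume "\<forall>(x, r) \<in> set ps. edge_word D x \<and> r \<in> relators_pm D" "length ps \<le> k"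
    "free_eq w (prod_conj ps)"
  then show "\<exists>ps. (\<forall>(x, r) \<in> set ps. edge_word D x \<and> r \<in> relators_pm D) \<and>
                  length ps \<le> k \<and> free_eq (inv_word w) (prod_conj ps)"
    by (intro exI[of _ "rev (map (\<lambda>(x, r). (x, inv_word r)) ps)"])
       (auto simp: inv_word_relators_pm inv_word_prod_conj[symmetric] intro: free_eq_inv_word)
qed

lemma area_le_conj: "area_le D k w \<Longrightarrow> edge_word D x \<Longrightarrow> area_le D k (x @ w @ inv_word x)"
  unfolding area_le_def
proof (elim exE conjE)
  fix ps
  assume ps: "\<forall>(y, r) \<in> set ps. edge_word D y \<and> r \<in> relators_pm D" "length ps \<le> k"
    "free_eq w (prod_conj ps)" and x: "edge_word D x"
  then show "\<exists>ps. (\<forall>(y, r) \<in> set ps. edge_word D y \<and> r \<in> relators_pm D) \<and>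
                  length ps \<le> k \<and> free_eq (x @ w @ inv_word x) (prod_conj ps)"
    by (intro exI[of _ "map (\<lambda>(y, r). (x @ y, r)) ps"])
       (auto intro!: free_eq_trans[OF _ conj_prod_conj] free_eq_context)
qed

lemma area_le_rotate: "area_le D k (u @ v) \<Longrightarrow> edge_word D u \<Longrightarrow> area_le D k (v @ u)"
proof -
  assume "area_le D k (u @ v)" "edge_word D u"
  then have "area_le D k (inv_word u @ (u @ v) @ inv_word (inv_word u))"
    by (intro area_le_conj) auto
  moreover have "free_eq (v @ u) (inv_word u @ (u @ v) @ inv_word (inv_word u))"
    using free_eq_context[OF free_eq_sym[OF free_eq_left_inverse[of u]], of "[]" "v @ u"] by simp
  ultimately show ?thesis
    using area_le_free_eq by blast
qed

definition rel_eq :: "'v set set \<Rightarrow> nat \<Rightarrow> 'v word \<Rightarrow> 'v word \<Rightarrow> bool" where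
  "rel_eq D k u v \<longleftrightarrow> edge_word D u \<and> edge_word D v \<and> area_le D k (u @ inv_word v)"

lemma rel_eq_Nil_iff: "rel_eq D k u [] \<longleftrightarrow> edge_word D u \<and> area_le D k u"
  by (simp add: rel_eq_def)

lemma rel_eq_of_free_eq: "free_eq u v \<Longrightarrow> edge_word D u \<Longrightarrow> edge_word D v \<Longrightarrow> rel_eq D 0 u v"
proof -
  assume "free_eq u v" "edge_word D u" "edge_word D v"
  moreover have "free_eq (u @ inv_word v) (v @ inv_word v)"
    using free_eq_append[OF \<open>free_eq u v\<close> free_eq_refl] .
  then have "area_le D 0 (u @ inv_word v)"
    using area_le_free_eq[OF free_eq_trans[OF _ free_eq_right_inverse] area_le_Nil] by blast
  ultimately show ?thesis
    by (simp add: rel_eq_def)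
qed

lemma rel_eq_refl: "edge_word D u \<Longrightarrow> rel_eq D 0 u u"
  by (simp add: rel_eq_of_free_eq)

lemma rel_eq_trans [trans]: "rel_eq D k u v \<Longrightarrow> rel_eq D l v w \<Longrightarrow> rel_eq D (k + l) u w"
  unfolding rel_eq_def
proof (elim conjE, intro conjI)
  assume "area_le D k (u @ inv_word v)" "area_le D l (v @ inv_word w)"
  then have "area_le D (k + l) ((u @ inv_word v) @ (v @ inv_word w))"
    by (rule area_le_append)
  moreover have "free_eq (u @ [] @ inv_word w) (u @ (inv_word v @ v) @ inv_word w)"
    by (intro free_eq_context free_eq_sym[OF free_eq_left_inverse])
  ultimately show "area_le D (k + l) (u @ inv_word w)"
    using area_le_free_eq by fastforce
qed

lemma rel_eq_sym: "rel_eq D k u v \<Longrightarrow> rel_eq D k v u"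
  unfolding rel_eq_def using area_le_inv_word[of D k "u @ inv_word v"] by simp

lemma rel_eq_context:
  "rel_eq D k u v \<Longrightarrow> edge_word D x \<Longrightarrow> edge_word D y \<Longrightarrow> rel_eq D k (x @ u @ y) (x @ v @ y)"
  unfolding rel_eq_def
proof (elim conjE, intro conjI)
  assume "area_le D k (u @ inv_word v)" "edge_word D x"
  then have "area_le D k (x @ (u @ inv_word v) @ inv_word x)"
    by (rule area_le_conj)
  moreover have "free_eq ((x @ u) @ (y @ inv_word y) @ (inv_word v @ inv_word x))
                         ((x @ u) @ [] @ (inv_word v @ inv_word x))"
    by (intro free_eq_context free_eq_right_inverse)
  ultimately show "area_le D k ((x @ u @ y) @ inv_word (x @ v @ y))"
    using area_le_free_eq by fastforce
qed auto

lemma rel_eq_append: "rel_eq D k u u' \<Longrightarrow> rel_eq D l v v' \<Longrightarrow> rel_eq D (k + l) (u @ v) (u' @ v')"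
proof -
  assume uu': "rel_eq D k u u'" and vv': "rel_eq D l v v'"
  then have "edge_word D u'" "edge_word D v"
    by (auto simp: rel_eq_def)
  then have "rel_eq D k (u @ v) (u' @ v)" "rel_eq D l (u' @ v) (u' @ v')"
    using rel_eq_context[OF uu' edge_word_Nil] rel_eq_context[OF vv' _ edge_word_Nil] by simp_all
  then show ?thesis
    by (rule rel_eq_trans)
qed

lemma rel_eq_inv_word: "rel_eq D k u v \<Longrightarrow> rel_eq D k (inv_word u) (inv_word v)"
  unfolding rel_eq_def
proof (elim conjE, intro conjI)
  assume "area_le D k (u @ inv_word v)" "edge_word D u"
  then have "area_le D k (inv_word v @ u)"
    by (rule area_le_rotate)
  then show "area_le D k (inv_word u @ inv_word (inv_word v))"
    using area_le_inv_word[of D k "inv_word v @ u"] by simp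
qed auto

section \<open>Triangle relators\<close>

definition triangle :: "'v set set \<Rightarrow> 'v edge \<Rightarrow> 'v edge \<Rightarrow> 'v edge \<Rightarrow> bool" where
  "triangle D x y z \<longleftrightarrow> x \<in> Edge D \<and> y \<in> Edge D \<and> z \<in> Edge D \<and>
     (\<forall>s. [(x, s), (y, s), (z, s)] \<in> relators_pm D \<and> [(y, s), (z, s), (x, s)] \<in> relators_pm D \<and>
          [(z, s), (x, s), (y, s)] \<in> relators_pm D \<and> [(x, s), (z, s), (y, s)] \<in> relators_pm D \<and>
          [(z, s), (y, s), (x, s)] \<in> relators_pm D \<and> [(y, s), (x, s), (z, s)] \<in> relators_pm D)"

lemma triangle_rotate: "triangle D x y z \<Longrightarrow> triangle D y z x"
  unfolding triangle_def by blast

lemma triangle_swap: "triangle D x y z \<Longrightarrow> triangle D y x z"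
  unfolding triangle_def by blast

lemma triangle_edges: "triangle D x y z \<Longrightarrow> x \<in> Edge D \<and> y \<in> Edge D \<and> z \<in> Edge D"
  unfolding triangle_def by blast

lemma comb_1cycle3_rotate: "comb_1cycle3 D e f g \<Longrightarrow> comb_1cycle3 D f g e"
  unfolding comb_1cycle3_def by auto

lemma comb_1cycle3_relators:
  assumes "comb_1cycle3 D e f g"
  shows "[(e, s), (f, s), (g, s)] \<in> relators_pm D" "[(g, s), (f, s), (e, s)] \<in> relators_pm D"
proof -
  have pos: "[(e, False), (f, False), (g, False)] \<in> relators_pm D"
    and neg: "[(e, True), (f, True), (g, True)] \<in> relators_pm D"
    using assms unfolding relators_pm_def relators_H_def by blast+
  show "[(e, s), (f, s), (g, s)] \<in> relators_pm D"
    using pos neg by (cases s) auto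
  show "[(g, s), (f, s), (e, s)] \<in> relators_pm D"
    using inv_word_relators_pm[OF pos] inv_word_relators_pm[OF neg]
    by (cases s) (auto simp: inv_letter_def)
qed

lemma triangle_of_comb_1cycle3: "comb_1cycle3 D e f g \<Longrightarrow> triangle D e f g"
  using comb_1cycle3_relators comb_1cycle3_rotate
  unfolding triangle_def comb_1cycle3_def by metis

lemma rel_eq_triangle_pair: "triangle D x y z \<Longrightarrow> rel_eq D 1 [(x, s), (y, s)] [(z, \<not> s)]"
  using area_le_relator[of "[(x, s), (y, s), (z, s)]" D]
  by (auto simp: triangle_def rel_eq_def inv_letter_def)

lemma rel_eq_triangle_commute: "triangle D x y z \<Longrightarrow> rel_eq D 2 [(x, s), (y, t)] [(y, t), (x, s)]"
proof -
  assume xyz: "triangle D x y z"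
  have same: "rel_eq D 2 [(a, s), (b, s)] [(b, s), (a, s)]" if "triangle D a b z" for a b s
    using rel_eq_trans[OF rel_eq_triangle_pair[OF that] rel_eq_sym[OF rel_eq_triangle_pair[OF triangle_swap[OF that]]]]
    by (simp add: numeral_2_eq_2)
  show ?thesis
  proof (cases "s = t")
    case False
    have x: "x \<in> Edge D" and y: "y \<in> Edge D"
      using triangle_edges[OF xyz] by auto
    have "rel_eq D 0 [(x, s), (y, t)] ([(x, s)] @ [(y, t), (x, t)] @ [(x, s)])"
      using False x y free_eq_sym[OF free_eq_cancel[of "[(x, s), (y, t)]" "(x, t)" "[]"]]
      by (intro rel_eq_of_free_eq) (auto simp: inv_letter_def)
    also have "rel_eq D 2 \<dots> ([(x, s)] @ [(x, t), (y, t)] @ [(x, s)])"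
      using x by (intro rel_eq_context same triangle_swap[OF xyz]) auto
    also have "rel_eq D 0 \<dots> [(y, t), (x, s)]"
      using False x y free_eq_cancel[of "[]" "(x, s)" "[(y, t), (x, s)]"]
      by (intro rel_eq_of_free_eq) (auto simp: inv_letter_def)
    finally show ?thesis
      by (simp add: numeral_2_eq_2)
  qed (use same xyz in simp)
qed

lemma rel_eq_commute_replicate:
  "rel_eq D 2 [a, b] [b, a] \<Longrightarrow> rel_eq D (2 * j) (a # replicate j b) (replicate j b @ [a])"
proof (induction j)
  case 0
  then have "edge_word D [a]"
    by (simp add: rel_eq_def)
  then show ?case
    by (simp add: rel_eq_refl)
next
  case (Suc j)
  have ab: "edge_word D [a]" "edge_word D [b]"
    using Suc.prems by (auto simp: rel_eq_def)
  have "rel_eq D 2 (a # b # replicate j b) (b # a # replicate j b)"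
    using rel_eq_context[OF Suc.prems, of "[]" "replicate j b"] ab by simp
  also have "rel_eq D (2 * j) \<dots> (b # replicate j b @ [a])"
    using rel_eq_context[OF Suc.IH[OF Suc.prems], of "[b]" "[]"] ab by simp
  finally show ?case
    by simp
qed

lemma epow_eq_replicate: "epow x k = replicate (nat \<bar>k\<bar>) (x, k < 0)"
  by (simp add: epow_def)

lemma edge_word_epow [simp]: "edge_word D (epow x k) \<longleftrightarrow> x \<in> Edge D \<or> k = 0"
  by (auto simp: epow_eq_replicate)

lemma inv_word_epow [simp]: "inv_word (epow x k) = epow x (- k)"
  by (auto simp: epow_def inv_word_def inv_letter_def)

lemma rel_eq_commute_epow:
  "triangle D x y z \<Longrightarrow> rel_eq D (2 * nat \<bar>k\<bar>) ((x, s) # epow y k) (epow y k @ [(x, s)])"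
  unfolding epow_eq_replicate by (intro rel_eq_commute_replicate rel_eq_triangle_commute)

lemma rel_eq_triangle_replicate:
  "triangle D x y z \<Longrightarrow> rel_eq D (j * j) (replicate j (x, s) @ replicate j (y, s) @ replicate j (z, s)) []"
proof (induction j)
  case 0
  then show ?case
    by (simp add: rel_eq_def)
next
  case (Suc j)
  note xyz = Suc.prems
  have E: "x \<in> Edge D" "y \<in> Edge D" "z \<in> Edge D"
    using triangle_edges[OF xyz] by auto
  let ?X = "replicate j (x, s)" and ?Y = "replicate j (y, s)" and ?Z = "replicate j (z, s)"
  have "rel_eq D 1 ((x, s) # ?X @ ?Y @ (y, s) # (z, s) # ?Z) ((x, s) # ?X @ ?Y @ (x, \<not> s) # ?Z)"
    using rel_eq_context[OF rel_eq_triangle_pair[OF triangle_rotate[OF xyz]], of "(x, s) # ?X @ ?Y" ?Z] E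
    by simp
  also have "rel_eq D (2 * j) \<dots> ((x, s) # ?X @ (x, \<not> s) # ?Y @ ?Z)"
    using rel_eq_context[OF rel_eq_sym[OF rel_eq_commute_replicate[OF rel_eq_triangle_commute[OF xyz]]],
        of "(x, s) # ?X" ?Z] E
    by simp
  also have "rel_eq D 0 \<dots> (?X @ ?Y @ ?Z)"
  proof (rule rel_eq_of_free_eq)
    have "(x, s) # ?X @ (x, \<not> s) # ?Y @ ?Z = ?X @ [(x, s), inv_letter (x, s)] @ ?Y @ ?Z"
      by (simp add: inv_letter_def replicate_append_same[symmetric])
    then show "free_eq ((x, s) # ?X @ (x, \<not> s) # ?Y @ ?Z) (?X @ ?Y @ ?Z)"
      using free_eq_cancel by metis
  qed (use E in auto)
  also have "rel_eq D (j * j) \<dots> []"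
    using Suc.IH[OF xyz] .
  finally show ?case
    by (simp add: replicate_app_Cons_same algebra_simps mult_2_right)
qed

lemma rel_eq_triangle_epow:
  "triangle D x y z \<Longrightarrow> rel_eq D (nat \<bar>k\<bar> * nat \<bar>k\<bar>) (epow x k @ epow y k @ epow z k) []"
  unfolding epow_eq_replicate by (rule rel_eq_triangle_replicate)

lemma free_eq_epow_snoc_inv: "free_eq (epow z k @ [(z, True)]) (epow z (k - 1))"
proof (cases "k > 0")
  case True
  then have "nat \<bar>k\<bar> = Suc (nat \<bar>k - 1\<bar>)"
    by simp
  with True have "epow z k @ [(z, True)] = epow z (k - 1) @ [(z, False), inv_letter (z, False)] @ []"
    by (simp add: epow_eq_replicate inv_letter_def replicate_append_same)
  then show ?thesis
    using free_eq_cancel[of "epow z (k - 1)" "(z, False)" "[]"] by simp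
next
  case False
  then have "nat \<bar>k - 1\<bar> = Suc (nat \<bar>k\<bar>)"
    by simp
  with False have "epow z (k - 1) = epow z k @ [(z, True)]"
    by (cases "k = 0") (simp_all add: epow_eq_replicate replicate_append_same)
  then show ?thesis
    by simp
qed

lemma free_eq_epow_Cons_inv: "free_eq ((z, True) # epow z k) (epow z (k - 1))"
proof (cases "k > 0")
  case True
  then have "nat \<bar>k\<bar> = Suc (nat \<bar>k - 1\<bar>)"
    by simp
  with True have "(z, True) # epow z k = [] @ [(z, True), inv_letter (z, True)] @ epow z (k - 1)"
    by (simp add: epow_eq_replicate inv_letter_def)
  then show ?thesis
    using free_eq_cancel[of "[]" "(z, True)" "epow z (k - 1)"] by simp
next
  case False
  then have "nat \<bar>k - 1\<bar> = Suc (nat \<bar>k\<bar>)"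
    by simp
  with False have "epow z (k - 1) = (z, True) # epow z k"
    by (cases "k = 0") (simp_all add: epow_eq_replicate)
  then show ?thesis
    by simp
qed

lemma rel_eq_triangle_hexagon:
  assumes xyz: "triangle D x y z" and M: "M = N - 1"
  shows "rel_eq D (nat \<bar>N\<bar> * nat \<bar>N\<bar> + nat \<bar>M\<bar> * nat \<bar>M\<bar> + 2 * nat \<bar>N\<bar> + 2 * nat \<bar>M\<bar>)
           (epow x M @ epow y N @ epow z M @ epow x N @ epow y M @ epow z N) []"
proof -
  have E: "x \<in> Edge D" "y \<in> Edge D" "z \<in> Edge D"
    using triangle_edges[OF xyz] by auto
  let ?Z = "(z, True)"
  \<comment> \<open>In the rotated word, split one letter \<open>z\<^sup>-\<^sup>1\<close> off \<open>z\<^sup>M\<close>, move it past \<open>x\<^sup>N\<close> and \<open>y\<^sup>M\<close>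
    and absorb it into \<open>z\<^sup>N\<close>; this leaves \<open>(y\<^sup>N z\<^sup>N x\<^sup>N)(y\<^sup>M z\<^sup>M x\<^sup>M)\<close>.\<close>
  have "rel_eq D 0 (epow y N @ epow z M @ epow x N @ epow y M @ epow z N @ epow x M)
                   (epow y N @ epow z N @ ?Z # epow x N @ epow y M @ epow z N @ epow x M)"
    using free_eq_context[OF free_eq_sym[OF free_eq_epow_snoc_inv[of z N]],
        of "epow y N" "epow x N @ epow y M @ epow z N @ epow x M"] E M
    by (intro rel_eq_of_free_eq) auto
  also have "rel_eq D (2 * nat \<bar>N\<bar>) \<dots> (epow y N @ epow z N @ epow x N @ ?Z # epow y M @ epow z N @ epow x M)"
    using rel_eq_context[OF rel_eq_commute_epow[OF triangle_rotate[OF triangle_rotate[OF xyz]]],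
        of "epow y N @ epow z N" "epow y M @ epow z N @ epow x M"] E
    by simp
  also have "rel_eq D (2 * nat \<bar>M\<bar>) \<dots> (epow y N @ epow z N @ epow x N @ epow y M @ ?Z # epow z N @ epow x M)"
    using rel_eq_context[OF rel_eq_commute_epow[OF triangle_rotate[OF triangle_rotate[OF triangle_swap[OF xyz]]]],
        of "epow y N @ epow z N @ epow x N" "epow z N @ epow x M"] E
    by simp
  also have "rel_eq D 0 \<dots> ((epow y N @ epow z N @ epow x N) @ epow y M @ epow z M @ epow x M)"
    using free_eq_context[OF free_eq_epow_Cons_inv[of z N],
        of "epow y N @ epow z N @ epow x N @ epow y M" "epow x M"] E M
    by (intro rel_eq_of_free_eq) auto
  also have "rel_eq D (nat \<bar>N\<bar> * nat \<bar>N\<bar> + nat \<bar>M\<bar> * nat \<bar>M\<bar>) \<dots> ([] @ [])"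
    using triangle_rotate[OF xyz] by (intro rel_eq_append rel_eq_triangle_epow)
  finally have "area_le D (nat \<bar>N\<bar> * nat \<bar>N\<bar> + nat \<bar>M\<bar> * nat \<bar>M\<bar> + 2 * nat \<bar>N\<bar> + 2 * nat \<bar>M\<bar>)
                  ((epow y N @ epow z M @ epow x N @ epow y M @ epow z N) @ epow x M)"
    by (simp add: rel_eq_Nil_iff algebra_simps)
  then show ?thesis
    using area_le_rotate E by (fastforce simp: rel_eq_Nil_iff)
qed

lemma rev_edge_Edge: "p \<in> Edge D \<Longrightarrow> rev_edge p \<in> Edge D"
  by (cases p) (auto simp: Edge_def rev_edge_def insert_commute)

lemma rev_edge_rev_edge [simp]: "rev_edge (rev_edge p) = p"
  by (simp add: rev_edge_def)

lemma rel_eq_backtrack: "p \<in> Edge D \<Longrightarrow> rel_eq D 1 [(p, s), (rev_edge p, s)] []"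
proof -
  assume p: "p \<in> Edge D"
  have pos: "[(e, False), (rev_edge e, False)] \<in> relators_pm D" if "e \<in> Edge D" for e
    using that unfolding relators_pm_def relators_H_def by blast
  have "[(p, s), (rev_edge p, s)] \<in> relators_pm D"
    using pos[OF p] inv_word_relators_pm[OF pos[OF rev_edge_Edge[OF p]]]
    by (cases s) (auto simp: inv_letter_def)
  then show ?thesis
    using area_le_relator p rev_edge_Edge[OF p] by (auto simp: rel_eq_Nil_iff)
qed

lemma rel_eq_replicate_cancel: "rel_eq D 1 [a, b] [] \<Longrightarrow> rel_eq D j (replicate j a @ replicate j b) []"
proof (induction j)
  case (Suc j)
  have ab: "edge_word D [a]" "edge_word D [b]"
    using Suc.prems by (auto simp: rel_eq_def)
  have "rel_eq D 1 (replicate j a @ [a, b] @ replicate j b) (replicate j a @ [] @ replicate j b)"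
    using ab by (intro rel_eq_context Suc.prems) auto
  then have "rel_eq D 1 (replicate (Suc j) a @ replicate (Suc j) b) (replicate j a @ replicate j b)"
    by (simp add: replicate_app_Cons_same)
  from rel_eq_trans[OF this Suc.IH[OF Suc.prems]] show ?case
    by simp
qed (simp add: rel_eq_def)

lemma edge_word_concat_epow: "set es \<subseteq> Edge D \<Longrightarrow> edge_word D (concat (map (\<lambda>e. epow e n) es))"
  by (induction es) auto

lemma rel_eq_path_backtrack:
  assumes "set es \<subseteq> Edge D"
  shows "rel_eq D (length es * nat \<bar>n\<bar>)
           (concat (map (\<lambda>e. epow e n) es) @ concat (map (\<lambda>e. epow e n) (rev (map rev_edge es)))) []"
  using assms
proof (induction es)
  case (Cons p es)
  have p: "p \<in> Edge D" "rev_edge p \<in> Edge D"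
    using Cons.prems rev_edge_Edge[of p D] by auto
  have "rel_eq D (length es * nat \<bar>n\<bar>)
          (epow p n @ (concat (map (\<lambda>e. epow e n) es) @ concat (map (\<lambda>e. epow e n) (rev (map rev_edge es))))
            @ epow (rev_edge p) n)
          (epow p n @ [] @ epow (rev_edge p) n)"
    using Cons p by (intro rel_eq_context) auto
  also have "rel_eq D (nat \<bar>n\<bar>) \<dots> []"
    using rel_eq_replicate_cancel[OF rel_eq_backtrack[OF p(1)]] by (simp add: epow_eq_replicate)
  finally show ?case
    by (simp add: algebra_simps)
qed (simp add: rel_eq_def)

lemma rel_eq_detour:
  assumes "area_le D k (A @ w @ B)" "area_le D j (A' @ A)" "area_le D l (B' @ B)"
    and "edge_word D A" "edge_word D B" "edge_word D A'" "edge_word D B'" "edge_word D w"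
  shows "rel_eq D (k + j + l) (inv_word B' @ inv_word A') (inv_word w)"
proof -
  have "area_le D k ((w @ B) @ A)"
    using area_le_rotate[of D k A "w @ B"] assms(1,4) by simp
  then have "rel_eq D k w (inv_word A @ inv_word B)"
    using assms by (simp add: rel_eq_def)
  also have "rel_eq D (j + l) \<dots> (A' @ B')"
    using assms by (intro rel_eq_append[OF rel_eq_sym rel_eq_sym]) (simp_all add: rel_eq_def)
  finally have "rel_eq D (k + (j + l)) w (A' @ B')" .
  then show ?thesis
    using rel_eq_sym[OF rel_eq_inv_word[of D "k + (j + l)" w "A' @ B'"]] by (simp add: add.assoc)
qed

section \<open>Geodesics in a spanning tree\<close>

abbreviation edge_walk :: "'v edge set \<Rightarrow> 'v list \<Rightarrow> bool" where
  "edge_walk T \<equiv> successively (\<lambda>x y. (x, y) \<in> T)"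

definition has_simple_cycle :: "'v edge set \<Rightarrow> bool" where
  "has_simple_cycle T \<longleftrightarrow> (\<exists>vs. length vs \<ge> 3 \<and> distinct vs \<and>
                               (\<forall>i < length vs. (vs ! i, vs ! ((i + 1) mod length vs)) \<in> T))"

lemma cpath_zip_iff: "cpath T u (zip (u # vs) vs) v \<longleftrightarrow> edge_walk T (u # vs) \<and> last (u # vs) = v"
  by (induction vs arbitrary: u) (auto simp: successively_Cons)

lemma zip_cpath_vertices: "cpath T u es v \<Longrightarrow> zip (u # map snd es) (map snd es) = es"
  by (induction es arbitrary: u) auto

lemma edge_walk_cpath: "cpath T u es v \<Longrightarrow> edge_walk T (u # map snd es) \<and> last (u # map snd es) = v"
  using cpath_zip_iff[of T u "map snd es" v] zip_cpath_vertices[of T u es v] by simp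

lemma cpath_append: "cpath T u (es @ fs) w \<longleftrightarrow> (\<exists>v. cpath T u es v \<and> cpath T v fs w)"
  by (induction es arbitrary: u) auto

lemma cpath_rev:
  "\<forall>e\<in>T. rev_edge e \<in> T \<Longrightarrow> cpath T u es v \<Longrightarrow> cpath T v (rev (map rev_edge es)) u"
  by (induction es arbitrary: u) (auto simp: cpath_append rev_edge_def)

lemma cpath_subset: "cpath T u es v \<Longrightarrow> set es \<subseteq> T"
  by (induction es arbitrary: u) auto

lemma successively_join:
  "successively P (as @ [x]) \<Longrightarrow> successively P (x # cs) \<Longrightarrow> successively P (as @ x # cs)"
  by (induction as) (auto simp: successively_Cons hd_append split: if_splits)

lemma successively_shortcut:
  assumes "successively P (as @ x # bs @ x # cs)"
  shows "successively P (as @ x # cs)"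
proof (rule successively_join)
  show "successively P (as @ [x])"
    using assms successively_append_iff[of P "as @ [x]" "bs @ x # cs"] by simp
  show "successively P (x # cs)"
    using assms successively_append_iff[of P "as @ x # bs" "x # cs"] by simp
qed

lemma has_simple_cycle_of_closed_walk:
  assumes "edge_walk T (vs @ [hd vs])" "distinct vs" "length vs \<ge> 3"
  shows "has_simple_cycle T"
  unfolding has_simple_cycle_def
proof (intro exI conjI allI impI)
  fix i
  assume i: "i < length vs"
  have "((vs @ [hd vs]) ! i, (vs @ [hd vs]) ! Suc i) \<in> T"
    using successively_nth[OF assms(1)] i by simp
  moreover have "(vs @ [hd vs]) ! Suc i = vs ! ((i + 1) mod length vs)"
  proof (cases "Suc i < length vs")
    case False
    then have "Suc i = length vs"
      using i by simp
    moreover have "vs \<noteq> []"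
      using assms(3) by auto
    ultimately show ?thesis
      by (simp add: nth_append hd_conv_nth)
  qed (simp add: nth_append)
  ultimately show "(vs ! i, vs ! ((i + 1) mod length vs)) \<in> T"
    using i by (simp add: nth_append)
qed (use assms in auto)

text \<open>The cycle: the first walk up to its first vertex \<open>c\<close> on the second one, followed by the
  second walk reversed from \<open>c\<close> back to \<open>u\<close>.\<close>

lemma has_simple_cycle_of_branching_walks:
  assumes sym: "\<forall>e\<in>T. rev_edge e \<in> T"
    and walks: "edge_walk T (u # xs)" "edge_walk T (u # ys)"
    and dist: "distinct (u # xs)" "distinct (u # ys)"
    and ne: "xs \<noteq> []" "ys \<noteq> []" and ends: "last xs = last ys" and branch: "hd xs \<noteq> hd ys"
  shows "has_simple_cycle T"
proof -
  have "last xs \<in> set ys"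
    using ends ne by simp
  then obtain as c bs where xs: "xs = as @ c # bs" and c: "c \<in> set ys"
      and as: "\<forall>a\<in>set as. a \<notin> set ys"
    using split_list_first_prop[of xs "\<lambda>a. a \<in> set ys"] ne(1) last_in_set by blast
  obtain cs ds where ys: "ys = cs @ c # ds"
    using split_list[OF c] by blast
  let ?vs = "u # as @ c # rev cs"
  have "distinct ?vs"
    using dist as xs ys by auto
  moreover have "length ?vs \<ge> 3"
    using branch xs ys by (cases as; cases cs) auto
  moreover have "edge_walk T (?vs @ [hd ?vs])"
  proof -
    have "edge_walk T ((u # as) @ [c])"
      using walks(1) xs successively_append_iff[of _ "u # as @ [c]" bs] by simp
    moreover have "edge_walk T (u # cs @ [c])"
      using walks(2) ys successively_append_iff[of _ "u # cs @ [c]" ds] by simp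
    then have "edge_walk T (rev (u # cs @ [c]))"
      unfolding successively_rev by (rule successively_mono) (use sym in \<open>auto simp: rev_edge_def\<close>)
    ultimately show ?thesis
      using successively_join[of _ "u # as" c "rev cs @ [u]"] by simp
  qed
  ultimately show ?thesis
    using has_simple_cycle_of_closed_walk by blast
qed

lemma distinct_walks_unique:
  assumes sym: "\<forall>e\<in>T. rev_edge e \<in> T" and acyclic: "\<not> has_simple_cycle T"
  shows "edge_walk T (u # xs) \<Longrightarrow> edge_walk T (u # ys) \<Longrightarrow> distinct (u # xs) \<Longrightarrow> distinct (u # ys)
           \<Longrightarrow> last (u # xs) = last (u # ys) \<Longrightarrow> xs = ys"
proof (induction xs arbitrary: u ys)
  case Nil
  then show ?case
    by (cases ys rule: rev_cases) auto
next
  case (Cons x xs)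
  show ?case
  proof (cases ys)
    case Nil
    then show ?thesis
      using Cons.prems by (cases xs rule: rev_cases) auto
  next
    case ys: (Cons y ys')
    show ?thesis
    proof (cases "x = y")
      case True
      then show ?thesis
        using Cons.IH[of x ys'] Cons.prems ys by (auto simp: successively_Cons)
    next
      case False
      then have "has_simple_cycle T"
        using has_simple_cycle_of_branching_walks[OF sym, of u "x # xs" ys] Cons.prems ys by auto
      with acyclic show ?thesis ..
    qed
  qed
qed

lemma spanning_tree_sym: "spanning_tree D T \<Longrightarrow> \<forall>e\<in>T. rev_edge e \<in> T"
  by (simp add: spanning_tree_def)

lemma spanning_tree_acyclic: "spanning_tree D T \<Longrightarrow> \<not> has_simple_cycle T"
  by (simp add: spanning_tree_def has_simple_cycle_def)

lemma geodesic_tree_path_distinct: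
  assumes geo: "geodesic_tree_path T u v es"
  shows "distinct (u # map snd es)"
proof (rule ccontr)
  assume "\<not> distinct (u # map snd es)"
  then obtain as x bs cs where "u # map snd es = as @ [x] @ bs @ [x] @ cs"
    using not_distinct_decomp by blast
  then have split: "u # map snd es = as @ x # bs @ x # cs"
    by simp
  have path: "cpath T u es v"
    using geo by (simp add: geodesic_tree_path_def)
  then have "edge_walk T (as @ x # bs @ x # cs)" "last (as @ x # bs @ x # cs) = v"
    using edge_walk_cpath[OF path] split by auto
  then have "edge_walk T (as @ x # cs)" "last (as @ x # cs) = v"
    using successively_shortcut[of _ as x bs cs] by (auto simp: last_append)
  moreover obtain vs where vs: "as @ x # cs = u # vs"
    using split by (cases as) auto
  ultimately have "cpath T u (zip (u # vs) vs) v"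
    by (simp add: cpath_zip_iff)
  then have "length es \<le> length vs"
    using geo unfolding geodesic_tree_path_def by fastforce
  moreover have "length vs < length es"
    using arg_cong[OF split, of length] arg_cong[OF vs, of length] by simp
  ultimately show False
    by simp
qed

lemma geodesic_tree_path_unique:
  assumes st: "spanning_tree D T" and "geodesic_tree_path T u v es" "geodesic_tree_path T u v es'"
  shows "es = es'"
proof -
  have paths: "cpath T u es v" "cpath T u es' v"
    using assms by (auto simp: geodesic_tree_path_def)
  then have "map snd es = map snd es'"
    using distinct_walks_unique[OF spanning_tree_sym[OF st] spanning_tree_acyclic[OF st]]
      geodesic_tree_path_distinct[OF assms(2)] geodesic_tree_path_distinct[OF assms(3)]
      edge_walk_cpath[OF paths(1)] edge_walk_cpath[OF paths(2)]
    by auto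
  then show ?thesis
    using zip_cpath_vertices[OF paths(1)] zip_cpath_vertices[OF paths(2)] by metis
qed

lemma geodesic_tree_path_exists:
  assumes "spanning_tree D T" "u \<in> vertices D" "v \<in> vertices D"
  shows "\<exists>es. geodesic_tree_path T u v es"
proof -
  obtain es0 where "cpath T u es0 v"
    using assms unfolding spanning_tree_def by blast
  then obtain es where "cpath T u es v" "\<forall>es'. cpath T u es' v \<longrightarrow> length es \<le> length es'"
    using ex_has_least_nat[of "\<lambda>es. cpath T u es v" es0 length] by blast
  then show ?thesis
    by (auto simp: geodesic_tree_path_def)
qed

lemma tree_path_geodesic:
  assumes "spanning_tree D T" "u \<in> vertices D" "v \<in> vertices D"
  shows "geodesic_tree_path T u v (tree_path T u v)"
proof -
  obtain es where es: "geodesic_tree_path T u v es"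
    using geodesic_tree_path_exists[OF assms] by blast
  show ?thesis
    unfolding tree_path_def
    by (rule theI[of _ es]) (use es geodesic_tree_path_unique[OF assms(1)] in blast)+
qed

lemma cpath_tree_path:
  "spanning_tree D T \<Longrightarrow> u \<in> vertices D \<Longrightarrow> v \<in> vertices D \<Longrightarrow> cpath T u (tree_path T u v) v"
  using tree_path_geodesic[of D T u v] by (simp add: geodesic_tree_path_def)

lemma tree_path_swap:
  assumes st: "spanning_tree D T" and u: "u \<in> vertices D" and v: "v \<in> vertices D"
  shows "tree_path T v u = rev (map rev_edge (tree_path T u v))"
proof -
  let ?es = "tree_path T u v"
  have geo: "geodesic_tree_path T u v ?es"
    by (rule tree_path_geodesic[OF st u v])
  have "geodesic_tree_path T v u (rev (map rev_edge ?es))"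
    unfolding geodesic_tree_path_def
  proof (intro conjI allI impI)
    show "cpath T v (rev (map rev_edge ?es)) u"
      using cpath_rev[OF spanning_tree_sym[OF st]] geo by (auto simp: geodesic_tree_path_def)
    fix es'
    assume "cpath T v es' u"
    then have "cpath T u (rev (map rev_edge es')) v"
      by (rule cpath_rev[OF spanning_tree_sym[OF st]])
    then show "length (rev (map rev_edge ?es)) \<le> length es'"
      using geo by (fastforce simp: geodesic_tree_path_def)
  qed
  then show ?thesis
    using geodesic_tree_path_unique[OF st tree_path_geodesic[OF st v u]] by blast
qed

lemma length_tree_path_le_tree_diam:
  fixes D :: "('v::finite) set set"
  assumes "u \<in> vertices D" "v \<in> vertices D"
  shows "length (tree_path T u v) \<le> tree_diam D T"
proof -
  have "finite {length (tree_path T u v) | u v. u \<in> vertices D \<and> v \<in> vertices D}"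
    by (rule finite_image_set2) auto
  then show ?thesis
    unfolding tree_diam_def using assms by (intro Max_ge) auto
qed

lemma vertices_of_Edge:
  assumes "simplicial_complex D" "(a, b) \<in> Edge D"
  shows "a \<in> vertices D" "b \<in> vertices D"
proof -
  have ab: "{a, b} \<in> D"
    using assms(2) by (simp add: Edge_def)
  have "\<And>t. t \<subseteq> {a, b} \<Longrightarrow> t \<noteq> {} \<Longrightarrow> t \<in> D"
    using assms(1) ab unfolding simplicial_complex_def by blast
  then show "a \<in> vertices D" "b \<in> vertices D"
    by (simp_all add: vertices_def)
qed

definition hexagon_cost :: "int \<Rightarrow> nat" where
  "hexagon_cost n = nat \<bar>n\<bar> * nat \<bar>n\<bar> + nat \<bar>n + 1\<bar> * nat \<bar>n + 1\<bar> + 2 * nat \<bar>n\<bar> + 2 * nat \<bar>n + 1\<bar>"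

lemma hexagon_cost_le: "real (hexagon_cost n) \<le> 2 * \<bar>real_of_int n\<bar>^2 + 6 * \<bar>real_of_int n\<bar> + 3"
proof -
  define m where "m = nat \<bar>n\<bar>"
  have "nat \<bar>n + 1\<bar> \<le> m + 1"
    unfolding m_def by (cases "n \<ge> 0") (simp_all add: nat_le_iff nat_add_distrib)
  then have "nat \<bar>n + 1\<bar> * nat \<bar>n + 1\<bar> \<le> (m + 1) * (m + 1)"
    using mult_le_mono by blast
  with \<open>nat \<bar>n + 1\<bar> \<le> m + 1\<close> have "hexagon_cost n \<le> 2 * (m * m) + 6 * m + 3"
    unfolding hexagon_cost_def m_def[symmetric] by (simp add: algebra_simps)
  then have "real (hexagon_cost n) \<le> real (2 * (m * m) + 6 * m + 3)"
    by (rule of_nat_mono)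
  moreover have "real m = \<bar>real_of_int n\<bar>"
    by (simp add: m_def)
  ultimately show ?thesis
    by (simp add: power2_eq_square)
qed

lemma total_cost_le:
  assumes "real ke \<le> K * \<bar>real_of_int n\<bar>^2" "real kf \<le> K * \<bar>real_of_int n\<bar>^2" "real kg \<le> K * \<bar>real_of_int n\<bar>^2"
  shows "real (ke + kf + kg + 6 * (L * nat \<bar>n\<bar>) + hexagon_cost n)
           \<le> (3 * K + 4) * \<bar>real_of_int n\<bar>^2 + (6 * real L + 6) * \<bar>real_of_int n\<bar> + 5"
proof -
  have "real (ke + kf + kg + 6 * (L * nat \<bar>n\<bar>) + hexagon_cost n)
          = real ke + real kf + real kg + 6 * (real L * \<bar>real_of_int n\<bar>) + real (hexagon_cost n)"
    by simp
  moreover have "(3 * K + 4) * \<bar>real_of_int n\<bar>^2 + (6 * real L + 6) * \<bar>real_of_int n\<bar> + 5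
      = 3 * (K * \<bar>real_of_int n\<bar>^2) + 4 * \<bar>real_of_int n\<bar>^2 + 6 * (real L * \<bar>real_of_int n\<bar>) + 6 * \<bar>real_of_int n\<bar> + 5"
    by (simp add: algebra_simps)
  ultimately show ?thesis
    using assms hexagon_cost_le[of n] zero_le_power2[of "\<bar>real_of_int n\<bar>"] by linarith
qed

context
  fixes D :: "('v::finite) set set" and T :: "'v edge set"
  assumes st: "spanning_tree D T"
begin

lemma tree_path_subset_Edge: "u \<in> vertices D \<Longrightarrow> v \<in> vertices D \<Longrightarrow> set (tree_path T u v) \<subseteq> Edge D"
  using cpath_subset[OF cpath_tree_path[OF st]] st unfolding spanning_tree_def by blast

lemma edge_word_p_n: "u \<in> vertices D \<Longrightarrow> v \<in> vertices D \<Longrightarrow> edge_word D (p_n T n u v)"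
  unfolding p_n_def by (intro edge_word_concat_epow tree_path_subset_Edge)

lemma area_le_p_n_backtrack:
  assumes "u \<in> vertices D" "v \<in> vertices D"
  shows "area_le D (tree_diam D T * nat \<bar>n\<bar>) (p_n T n u v @ p_n T n v u)"
proof -
  have "area_le D (length (tree_path T u v) * nat \<bar>n\<bar>) (p_n T n u v @ p_n T n v u)"
    using rel_eq_path_backtrack[OF tree_path_subset_Edge[OF assms], of n]
    by (simp add: p_n_def tree_path_swap[OF st assms] rel_eq_Nil_iff)
  then show ?thesis
    using length_tree_path_le_tree_diam[OF assms] area_le_mono mult_le_mono1 by blast
qed

lemma rel_eq_edge_loop:
  assumes loop: "area_le D k (p_n T n q s @ epow (s, t) n @ p_n T n t q)"
    and q: "q \<in> vertices D" and s: "s \<in> vertices D" and t: "t \<in> vertices D" and st_edge: "(s, t) \<in> Edge D"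
  shows "rel_eq D (k + 2 * (tree_diam D T * nat \<bar>n\<bar>))
           (inv_word (p_n T n q t) @ inv_word (p_n T n s q)) (epow (s, t) (- n))"
proof -
  have "rel_eq D (k + tree_diam D T * nat \<bar>n\<bar> + tree_diam D T * nat \<bar>n\<bar>)
          (inv_word (p_n T n q t) @ inv_word (p_n T n s q)) (inv_word (epow (s, t) n))"
    by (rule rel_eq_detour[OF loop area_le_p_n_backtrack[OF s q] area_le_p_n_backtrack[OF q t]])
       (simp_all add: edge_word_p_n q s t st_edge)
  then show ?thesis
    by (simp add: mult_2 add.assoc)
qed

lemma area_le_Phi_inverse_cycle:
  assumes sc: "simplicial_complex D" and q: "q \<in> vertices D" and cyc: "comb_1cycle3 D e f g"
    and loop_e: "area_le D ke (p_n T n q (iota e) @ epow e n @ p_n T n (tau e) q)"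
    and loop_f: "area_le D kf (p_n T n q (iota f) @ epow f n @ p_n T n (tau f) q)"
    and loop_g: "area_le D kg (p_n T n q (iota g) @ epow g n @ p_n T n (tau g) q)"
  shows "area_le D (ke + kf + kg + 6 * (tree_diam D T * nat \<bar>n\<bar>)
           + hexagon_cost n) (Phi T q n [(e, True), (f, True), (g, True)])"
proof -
  obtain a b c where e: "e = (a, b)" and f: "f = (b, c)" and g: "g = (c, a)"
    using cyc by (cases e; cases f; cases g) (auto simp: comb_1cycle3_def)
  have E: "e \<in> Edge D" "f \<in> Edge D" "g \<in> Edge D"
    using cyc by (simp_all add: comb_1cycle3_def)
  then have V: "a \<in> vertices D" "b \<in> vertices D" "c \<in> vertices D"
    using vertices_of_Edge[OF sc] e f by blast+
  let ?L = "tree_diam D T * nat \<bar>n\<bar>" and ?M = "- (n + 1)"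
  let ?P = "\<lambda>u v. inv_word (p_n T n u v)"
  have "rel_eq D (0 + (kg + 2 * ?L + (0 + (ke + 2 * ?L + (0 + (kf + 2 * ?L))))))
          (epow e ?M @ (?P q a @ ?P c q) @ epow f ?M @ (?P q b @ ?P a q) @ epow g ?M @ (?P q c @ ?P b q))
          (epow e ?M @ epow g (- n) @ epow f ?M @ epow e (- n) @ epow g ?M @ epow f (- n))"
    using E V q loop_e loop_f loop_g
    by (intro rel_eq_append rel_eq_refl; simp add: e f g rel_eq_edge_loop)
  also have "rel_eq D (hexagon_cost n) \<dots> []"
    unfolding hexagon_cost_def using rel_eq_triangle_hexagon[OF triangle_rotate[OF triangle_swap[OF triangle_of_comb_1cycle3[OF cyc]]],
        of ?M "- n"]
    by (simp add: abs_minus_commute add.commute)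
  finally have "area_le D (ke + kf + kg + 6 * ?L + hexagon_cost n)
      ((epow e ?M @ ?P q a @ ?P c q @ epow f ?M @ ?P q b @ ?P a q @ epow g ?M @ ?P q c) @ ?P b q)"
    by (simp add: rel_eq_Nil_iff algebra_simps)
  then have "area_le D (ke + kf + kg + 6 * ?L + hexagon_cost n)
      (?P b q @ epow e ?M @ ?P q a @ ?P c q @ epow f ?M @ ?P q b @ ?P a q @ epow g ?M @ ?P q c)"
    by (rule area_le_rotate) (simp add: E V q edge_word_p_n)
  moreover have "Phi T q n [(e, True), (f, True), (g, True)]
      = ?P b q @ epow e ?M @ ?P q a @ ?P c q @ epow f ?M @ ?P q b @ ?P a q @ epow g ?M @ ?P q c"
    by (simp add: Phi_def Phi_edge_def e f g)
  ultimately show ?thesis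
    by simp
qed

end

theorem lemma4p8:
  fixes D :: "('v::finite) set set" and T :: "'v edge set" and q :: 'v and K :: real
    and e f g :: "'v edge" and n :: int
  assumes "simplicial_complex D"
    and "flag_complex D"
    and "simply_connected (realization D)"
    and "q \<in> vertices D"
    and "spanning_tree D T"
    and "\<forall>e'\<in>Edge D. \<forall>m::int.
           ereal_of_enat (Area D (p_n T m q (iota e') @ epow e' m @ p_n T m (tau e') q))
             \<le> ereal (K * \<bar>real_of_int m\<bar>^2)"
    and "comb_1cycle3 D e f g"
  shows "ereal_of_enat (Area D (Phi T q n [(e, True), (f, True), (g, True)]))
           \<le> ereal ((3 * K + 4) * \<bar>real_of_int n\<bar>^2
                   + (6 * real (tree_diam D T) + 6) * \<bar>real_of_int n\<bar> + 5)"
proof -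
  have "\<exists>k. area_le D k (p_n T n q (iota x) @ epow x n @ p_n T n (tau x) q) \<and> real k \<le> K * \<bar>real_of_int n\<bar>^2"
    if "x \<in> {e, f, g}" for x
    using assms(6,7) that by (auto simp: comb_1cycle3_def Area_le_ereal_iff[symmetric])
  then obtain ke kf kg
    where ke: "area_le D ke (p_n T n q (iota e) @ epow e n @ p_n T n (tau e) q)" "real ke \<le> K * \<bar>real_of_int n\<bar>^2"
      and kf: "area_le D kf (p_n T n q (iota f) @ epow f n @ p_n T n (tau f) q)" "real kf \<le> K * \<bar>real_of_int n\<bar>^2"
      and kg: "area_le D kg (p_n T n q (iota g) @ epow g n @ p_n T n (tau g) q)" "real kg \<le> K * \<bar>real_of_int n\<bar>^2"
    by (metis insertCI)
  then have "area_le D (ke + kf + kg + 6 * (tree_diam D T * nat \<bar>n\<bar>) + hexagon_cost n)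
              (Phi T q n [(e, True), (f, True), (g, True)])"
    by (intro area_le_Phi_inverse_cycle[OF assms(5,1,4,7)])
  with total_cost_le[OF ke(2) kf(2) kg(2)] show ?thesis
    unfolding Area_le_ereal_iff by blast
qed

end
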